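(* Let $G=\mathrm{SL}_2(q)$ with $q$ a prime power. If $q$ is even, then every subgroup of $G$ is a perfect code of $G$. If $q$ is odd, then a subgroup $H$ of $G$ is a perfect code of $G$ if and only if either $|H|_2=1$ or $|H|_2=|G|_2$.
   Context: $|X|_2$ denotes the largest power of $2$ dividing $|X|$. For a group $G$ with identity $e$ and an inverse-closed subset $S\subseteq G\setminus\{e\}$, the Cayley graph $\mathrm{Cay}(G,S)$ has vertex set $G$ and edges $\{g,sg\}$ for $s\in S$, $g\in G$. A perfect code in a graph is an independent set $C$ of vertices such that every vertex outside $C$ is adjacent to exactly one vertex of $C$. A subgroup $H$ of $G$ is a perfect code of $G$ if some Cayley graph of $G$ admits $H$ as a perfect code. *)

theory Defs
  imports "HOL-Algebra.Group" "HOL-Computational_Algebra.Primes"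
begin

text \<open>The special linear group SL_2 over a field, matrices [[a,b],[c,d]] encoded as (a,b,c,d).\<close>
definition SL2_mult :: "('a::field \<times> 'a \<times> 'a \<times> 'a) \<Rightarrow> ('a \<times> 'a \<times> 'a \<times> 'a) \<Rightarrow> ('a \<times> 'a \<times> 'a \<times> 'a)" where
  "SL2_mult x y = (case x of (a,b,c,d) \<Rightarrow> case y of (e,f,g,h) \<Rightarrow>
                     (a*e + b*g, a*f + b*h, c*e + d*g, c*f + d*h))"

definition SL2 :: "('a::field \<times> 'a \<times> 'a \<times> 'a) monoid" where
  "SL2 = \<lparr> carrier = {(a,b,c,d). a * d - b * c = 1},
           monoid.mult = SL2_mult,
           monoid.one = (1,0,0,1) \<rparr>"

definition cayley_adj :: "('g, 'b) monoid_scheme \<Rightarrow> 'g set \<Rightarrow> 'g \<Rightarrow> 'g \<Rightarrow> bool" where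
  "cayley_adj G S x y \<longleftrightarrow> x \<in> carrier G \<and> y \<in> carrier G \<and>
     (\<exists>s\<in>S. y = s \<otimes>\<^bsub>G\<^esub> x \<or> x = s \<otimes>\<^bsub>G\<^esub> y)"

definition cayley_perfect_code :: "('g, 'b) monoid_scheme \<Rightarrow> 'g set \<Rightarrow> 'g set \<Rightarrow> bool" where
  "cayley_perfect_code G S C \<longleftrightarrow> C \<subseteq> carrier G \<and>
     (\<forall>x\<in>C. \<forall>y\<in>C. \<not> cayley_adj G S x y) \<and>
     (\<forall>x\<in>carrier G - C. \<exists>!c. c \<in> C \<and> cayley_adj G S x c)"

definition subgroup_perfect_code :: "('g, 'b) monoid_scheme \<Rightarrow> 'g set \<Rightarrow> bool" where
  "subgroup_perfect_code G H \<longleftrightarrow> subgroup H G \<and>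
     (\<exists>S. S \<subseteq> carrier G - {\<one>\<^bsub>G\<^esub>} \<and> (\<forall>s\<in>S. inv\<^bsub>G\<^esub> s \<in> S) \<and>
          cayley_perfect_code G S H)"

definition two_part :: "nat \<Rightarrow> nat" where
  "two_part n = 2 ^ multiplicity (2::nat) n"

end

(*
  A subgroup H is a perfect code of G iff it has a right transversal T closed under inversion
  (the connection set is then T - H).  Such a T is assembled double coset by double coset: any
  right coset Hy in HxH and any Hz in Hx^-1H contain mutually inverse elements, so the cosets in
  HxH can be matched with those in Hx^-1H or, if HxH = Hx^-1H, paired off among themselves.
  This fails only if HxH = Hx^-1H consists of an odd number of cosets, and then HxH must contain
  an element of square 1.  It does if H has odd order, or if every element of 2-power order in G
  has order at most 2 (take an odd power of some g in Hx with g^2 in H), and also if H has odd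
  index: then x lies in H, since otherwise K = H meet g^-1 H g and K union Kg would be subgroups
  of orders |K| and 2|K| with |G| = |G : H| |HxH : H| |K|.  In SL_2(q) with q even, u^2 = 1 iff
  tr u = 0, and tr (u^2) = (tr u)^2, so every element of 2-power order is an involution.
  Conversely, inversion on an inverse-closed transversal T fixes exactly its elements of square 1;
  if all of these lie in H, T contains only one of them, so |T| = |G : H| is odd.  For q odd
  this applies to every subgroup of even order, as it contains -I, the only involution of SL_2(q).
*)
theory Submission
  imports Defs "HOL-Algebra.Group_Action" "HOL-Algebra.Multiplicative_Group"
begin

lemma even_card_iff_even_card_fixpoints:
  assumes "finite A" and "\<And>x. x \<in> A \<Longrightarrow> f x \<in> A" and "\<And>x. x \<in> A \<Longrightarrow> f (f x) = x"
  shows "even (card A) \<longleftrightarrow> even (card {x\<in>A. f x = x})"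
  using assms
proof (induction A rule: finite_psubset_induct)
  case (psubset A)
  show ?case
  proof (cases "\<forall>x\<in>A. f x = x")
    case True
    then have "{x\<in>A. f x = x} = A" by blast
    then show ?thesis by simp
  next
    case False
    then obtain x where x: "x \<in> A" "f x \<noteq> x" by blast
    let ?B = "A - {x, f x}"
    have "f y \<in> ?B" if y: "y \<in> ?B" for y
    proof -
      have "f y \<in> A" "f (f y) = y" "f (f x) = x"
        using x(1) y psubset.prems by auto
      then show ?thesis
        using y by auto
    qed
    then have "even (card ?B) \<longleftrightarrow> even (card {y\<in>?B. f y = y})"
      using x psubset.prems by (intro psubset.IH) auto
    moreover have "{y\<in>?B. f y = y} = {y\<in>A. f y = y}"
      using x psubset.prems by auto
    moreover have "card A = card ?B + 2"
    proof -
      have "{x, f x} \<subseteq> A" using x psubset.prems by auto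
      then have "card {x, f x} \<le> card A" by (rule card_mono[OF \<open>finite A\<close>])
      then show ?thesis using x \<open>{x, f x} \<subseteq> A\<close> psubset.hyps by (simp add: card_Diff_subset)
    qed
    ultimately show ?thesis by simp
  qed
qed

lemma card_image_eq_if_same_fibres:
  assumes "\<And>a b. a \<in> A \<Longrightarrow> b \<in> A \<Longrightarrow> f a = f b \<longleftrightarrow> g a = g b"
  shows "card (f ` A) = card (g ` A)"
proof -
  let ?\<phi> = "\<lambda>u. g (inv_into A f u)"
  have \<phi>: "?\<phi> (f a) = g a" if "a \<in> A" for a
    using assms[OF inv_into_into[of "f a" f A] that] f_inv_into_f[of "f a" f A] that by auto
  then have "?\<phi> ` f ` A = g ` A"
    by (simp add: image_image)
  moreover have "inj_on ?\<phi> (f ` A)"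
    using \<phi> assms by (auto simp: inj_on_def)
  ultimately show ?thesis
    using card_image by metis
qed

lemma two_part_eq_1_iff: "n > 0 \<Longrightarrow> two_part n = 1 \<longleftrightarrow> odd n"
  unfolding two_part_def using multiplicity_eq_zero_iff[of n "2::nat"] by simp

lemma two_part_eq_two_part_mult_iff:
  assumes "a > 0" "n > 0"
  shows "two_part n = two_part (a * n) \<longleftrightarrow> odd a"
proof -
  have "multiplicity 2 (a * n) = multiplicity 2 a + multiplicity (2::nat) n"
    using prime_elem_multiplicity_mult_distrib[of 2 a n] assms by simp
  then show ?thesis
    unfolding two_part_def using multiplicity_eq_zero_iff[of a "2::nat"] assms by simp
qed

context group
begin

lemma inv_mult_cancel_left [simp]: "a \<in> carrier G \<Longrightarrow> x \<in> carrier G \<Longrightarrow> inv a \<otimes> (a \<otimes> x) = x"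
  by (simp add: m_assoc[symmetric])

lemma mult_inv_cancel_left [simp]: "a \<in> carrier G \<Longrightarrow> x \<in> carrier G \<Longrightarrow> a \<otimes> (inv a \<otimes> x) = x"
  by (simp add: m_assoc[symmetric])

lemma rcosets_eqI:
  assumes H: "subgroup H G" and "c \<in> rcosets H" "c' \<in> rcosets H" "t \<in> c" "t \<in> c'"
  shows "c = c'"
  using rcos_disjoint[OF H] assms(2-) unfolding pairwise_def disjnt_def by blast

lemma finite_rcosets:
  "subgroup H G \<Longrightarrow> finite (carrier G) \<Longrightarrow> finite (rcosets H)"
  using rcosets_subset_PowG by (meson finite_Pow_iff finite_subset)

lemma rcos_eq_iff:
  assumes K: "subgroup K G" and a: "a \<in> carrier G" and b: "b \<in> carrier G"
  shows "K #> a = K #> b \<longleftrightarrow> a \<otimes> inv b \<in> K"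
proof
  assume "K #> a = K #> b"
  then have "a \<in> K #> b" using rcos_self[OF a K] by simp
  then show "a \<otimes> inv b \<in> K" using subgroup.rcos_module[OF K is_group b a] by simp
next
  assume "a \<otimes> inv b \<in> K"
  then have "a \<in> K #> b" using subgroup.rcos_module[OF K is_group b a] by simp
  then show "K #> a = K #> b" using repr_independence[OF _ b K] by simp
qed

lemma Int_rcos_eq_empty:
  assumes H: "subgroup H G" and y: "y \<in> carrier G" "y \<notin> H"
  shows "H \<inter> (H #> y) = {}"
proof (rule ccontr)
  assume "H \<inter> (H #> y) \<noteq> {}"
  then obtain t where "t \<in> H" "t \<in> H #> y"
    by blast
  moreover have "H \<in> rcosets H"
    using rcosetsI[OF subgroup.subset[OF H] one_closed] coset_mult_one[OF subgroup.subset[OF H]] by simp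
  moreover have "H #> y \<in> rcosets H"
    using rcosetsI[OF subgroup.subset[OF H] y(1)] .
  ultimately have "H = H #> y"
    using rcosets_eqI[OF H] by blast
  then show False
    using rcos_self[OF y(1) H] y(2) by simp
qed

lemma rcos_ex1_iff:
  assumes H: "subgroup H G" and y: "y \<in> carrier G"
  shows "(\<exists>!t. t \<in> S \<and> t \<in> H #> y) \<longleftrightarrow> (\<exists>!c. c \<in> H \<and> c \<otimes> y \<in> S)"
proof
  assume "\<exists>!t. t \<in> S \<and> t \<in> H #> y"
  then obtain t where t: "t \<in> S" "t \<in> H #> y" and uniq: "\<And>t'. t' \<in> S \<Longrightarrow> t' \<in> H #> y \<Longrightarrow> t' = t"
    by blast
  obtain c where c: "c \<in> H" "t = c \<otimes> y"
    using t(2) unfolding r_coset_def by blast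
  show "\<exists>!c. c \<in> H \<and> c \<otimes> y \<in> S"
  proof (rule ex1I[of _ c])
    show "c \<in> H \<and> c \<otimes> y \<in> S"
      using c t by simp
  next
    fix c' assume c': "c' \<in> H \<and> c' \<otimes> y \<in> S"
    then have "c' \<otimes> y = c \<otimes> y"
      using uniq rcosI[OF _ subgroup.subset[OF H] y] c(2) by blast
    then show "c' = c"
      using c' c(1) y H by (simp add: subgroup.mem_carrier)
  qed
next
  assume "\<exists>!c. c \<in> H \<and> c \<otimes> y \<in> S"
  then obtain c where c: "c \<in> H" "c \<otimes> y \<in> S" and uniq: "\<And>c'. c' \<in> H \<Longrightarrow> c' \<otimes> y \<in> S \<Longrightarrow> c' = c"
    by blast
  show "\<exists>!t. t \<in> S \<and> t \<in> H #> y"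
  proof (rule ex1I[of _ "c \<otimes> y"])
    show "c \<otimes> y \<in> S \<and> c \<otimes> y \<in> H #> y"
      using c rcosI[OF _ subgroup.subset[OF H] y] by blast
  next
    fix t assume t: "t \<in> S \<and> t \<in> H #> y"
    then obtain c' where "c' \<in> H" "t = c' \<otimes> y"
      unfolding r_coset_def by blast
    then show "t = c \<otimes> y"
      using t uniq by blast
  qed
qed

lemma card_saturated_by_rcosets:
  assumes H: "subgroup H G" and fin: "finite (carrier G)"
    and E: "E \<subseteq> carrier G" "\<And>y. y \<in> E \<Longrightarrow> H #> y \<subseteq> E"
  shows "card E = card ((\<lambda>y. H #> y) ` E) * card H"
proof -
  let ?C = "(\<lambda>y. H #> y) ` E"
  have C: "?C \<subseteq> rcosets H"
    using E(1) by (auto intro: rcosetsI[OF subgroup.subset[OF H]])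
  have "\<Union>?C = E"
    using E rcos_self[OF _ H] by blast
  moreover have "card H * card ?C = card (\<Union>?C)"
  proof (rule card_partition)
    show "finite ?C" "finite (\<Union>?C)"
      using calculation E(1) fin by (auto intro: finite_subset)
    show "card c = card H" if "c \<in> ?C" for c
      using that C card_rcosets_equal subgroup.subset[OF H] by auto
    show "c1 \<inter> c2 = {}" if "c1 \<in> ?C" "c2 \<in> ?C" "c1 \<noteq> c2" for c1 c2
      using that C rcosets_eqI[OF H] by blast
  qed
  ultimately show ?thesis by (simp add: mult.commute)
qed

lemma subgroup_pow_card_eq_one:
  assumes H: "subgroup H G" and h: "h \<in> H"
  shows "h [^] card H = \<one>"
proof -
  interpret K: group "G\<lparr>carrier := H\<rparr>"
    using subgroup.subgroup_is_group[OF H is_group] .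
  have "h [^]\<^bsub>G\<lparr>carrier := H\<rparr>\<^esub> order (G\<lparr>carrier := H\<rparr>) = \<one>\<^bsub>G\<lparr>carrier := H\<rparr>\<^esub>"
    using K.pow_order_eq_1 h by simp
  then show ?thesis
    by (simp add: order_def nat_pow_consistent[symmetric])
qed

lemma subgroup_involution_if_even_card:
  assumes H: "subgroup H G" and fin: "finite (carrier G)" and even: "even (card H)"
  obtains h where "h \<in> H" "h \<noteq> \<one>" "h \<otimes> h = \<one>"
proof -
  let ?F = "{h \<in> H. inv h = h}"
  have Hc: "H \<subseteq> carrier G" using subgroup.subset[OF H] .
  have "even (card ?F)"
    using even fin Hc subgroup.m_inv_closed[OF H]
    by (subst even_card_iff_even_card_fixpoints[symmetric]) (auto intro: finite_subset)
  moreover have "\<one> \<in> ?F"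
    using subgroup.one_closed[OF H] by simp
  ultimately have "\<not> ?F \<subseteq> {\<one>}"
    using subset_singletonD by fastforce
  then obtain h where "h \<in> ?F" "h \<noteq> \<one>"
    by blast
  then show thesis
    using that Hc r_inv[of h] by auto
qed

lemma odd_power_of_squares_eq_one:
  assumes fin: "finite (carrier G)"
    and fourth_root: "\<And>u. u \<in> carrier G \<Longrightarrow> (u \<otimes> u) \<otimes> (u \<otimes> u) = \<one> \<Longrightarrow> u \<otimes> u = \<one>"
  shows "\<exists>m::nat. odd m \<and> (\<forall>g\<in>carrier G. (g \<otimes> g) [^] m = \<one>)"
proof -
  have square: "x \<otimes> x = x [^] (2::nat)" if "x \<in> carrier G" for x
    using that by (simp add: numeral_2_eq_2)
  have two_power: "u \<otimes> u = \<one>" if "u \<in> carrier G" "u [^] ((2::nat) ^ k) = \<one>" for u k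
    using that
  proof (induction k arbitrary: u)
    case 0
    then show ?case by simp
  next
    case (Suc k)
    have "(u \<otimes> u) [^] ((2::nat) ^ k) = u [^] ((2::nat) ^ Suc k)"
      using Suc.prems(1) by (simp add: square nat_pow_pow)
    then have "(u \<otimes> u) \<otimes> (u \<otimes> u) = \<one>"
      using Suc.IH[of "u \<otimes> u"] Suc.prems by simp
    then show ?case
      using fourth_root Suc.prems(1) by blast
  qed
  have "order G \<noteq> 0"
    using fin order_gt_0_iff_finite by simp
  then obtain m where order: "order G = 2 ^ multiplicity 2 (order G) * m" and "\<not> 2 dvd m"
    using multiplicity_decompose'[of "order G" 2] by auto
  moreover have "(g \<otimes> g) [^] m = \<one>" if g: "g \<in> carrier G" for g
  proof -
    have "(g [^] m) [^] ((2::nat) ^ multiplicity 2 (order G)) = \<one>"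
      using pow_order_eq_1[OF g] order g by (simp add: nat_pow_pow mult.commute)
    then have "g [^] m \<otimes> g [^] m = \<one>"
      using two_power g by simp
    then show ?thesis
      using g by (simp add: square nat_pow_pow nat_pow_mult mult_2 mult.commute)
  qed
  ultimately show ?thesis
    by blast
qed

lemma subgroup_conjugate_inter:
  assumes H: "subgroup H G" and g: "g \<in> carrier G"
  shows "subgroup {k \<in> H. g \<otimes> k \<otimes> inv g \<in> H} G"
proof -
  have "k \<in> inv g <#\<^bsub>G\<^esub> H #> g \<longleftrightarrow> g \<otimes> k \<otimes> inv g \<in> H" if "k \<in> H" for k
  proof
    assume "k \<in> inv g <#\<^bsub>G\<^esub> H #> g"
    then obtain h where "h \<in> H" "k = inv g \<otimes> h \<otimes> g"
      unfolding l_coset_def r_coset_def by blast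
    then show "g \<otimes> k \<otimes> inv g \<in> H"
      using g H by (simp add: m_assoc subgroup.mem_carrier)
  next
    assume "g \<otimes> k \<otimes> inv g \<in> H"
    moreover have "k = inv g \<otimes> (g \<otimes> k \<otimes> inv g) \<otimes> g"
      using g that H by (simp add: m_assoc subgroup.mem_carrier)
    ultimately show "k \<in> inv g <#\<^bsub>G\<^esub> H #> g"
      unfolding l_coset_def r_coset_def by blast
  qed
  then have "{k \<in> H. g \<otimes> k \<otimes> inv g \<in> H} = H \<inter> (inv g <#\<^bsub>G\<^esub> H #> g)"
    by blast
  then show ?thesis
    using subgroups_Inter_pair[OF H subgroup_conjugation_is_surj1[OF g H]] by simp
qed

lemma subgroup_Un_rcos:
  assumes K: "subgroup K G" and g: "g \<in> carrier G" "g \<otimes> g \<in> K"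
    and normalizes: "\<And>k. k \<in> K \<Longrightarrow> g \<otimes> k \<otimes> inv g \<in> K"
  shows "subgroup (K \<union> (K #> g)) G"
proof -
  have Kc: "K \<subseteq> carrier G" using subgroup.subset[OF K] .
  have "x \<in> K #> g \<longleftrightarrow> x \<in> carrier G \<and> x \<otimes> inv g \<in> K" for x
    using subgroup.rcos_module[OF K is_group g(1), of x] r_coset_subset_G[OF Kc g(1)] by auto
  then have mem: "x \<in> K \<union> (K #> g) \<longleftrightarrow> x \<in> carrier G \<and> (x \<in> K \<or> x \<otimes> inv g \<in> K)" for x
    using Kc by blast
  show ?thesis
  proof (rule subgroupI)
    show "K \<union> (K #> g) \<subseteq> carrier G" and "K \<union> (K #> g) \<noteq> {}"
      using mem subgroup.one_closed[OF K] by auto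
  next
    fix a assume "a \<in> K \<union> (K #> g)"
    then consider "a \<in> K" | "a \<in> carrier G" "a \<otimes> inv g \<in> K" using mem by blast
    then show "inv a \<in> K \<union> (K #> g)"
    proof cases
      case 1 then show ?thesis using subgroup.m_inv_closed[OF K] by blast
    next
      case 2
      have "inv a \<otimes> inv g = inv ((g \<otimes> (a \<otimes> inv g) \<otimes> inv g) \<otimes> (g \<otimes> g))"
        using 2(1) g(1) by (simp add: m_assoc inv_mult_group)
      also have "\<dots> \<in> K"
        using normalizes[OF 2(2)] g(2) K by (simp add: subgroup.m_closed subgroup.m_inv_closed)
      finally show ?thesis using mem 2(1) by simp
    qed
  next
    fix a b assume "a \<in> K \<union> (K #> g)" "b \<in> K \<union> (K #> g)"
    then have ab: "a \<in> carrier G" "b \<in> carrier G"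
      and "a \<in> K \<or> a \<otimes> inv g \<in> K" "b \<in> K \<or> b \<otimes> inv g \<in> K"
      using mem by blast+
    then consider "a \<in> K" "b \<in> K" | "a \<in> K" "b \<otimes> inv g \<in> K"
      | "a \<otimes> inv g \<in> K" "b \<in> K" | "a \<otimes> inv g \<in> K" "b \<otimes> inv g \<in> K" by blast
    then show "a \<otimes> b \<in> K \<union> (K #> g)"
    proof cases
      case 1 then show ?thesis using subgroup.m_closed[OF K] by blast
    next
      case 2
      have "a \<otimes> b \<otimes> inv g = a \<otimes> (b \<otimes> inv g)"
        using ab g(1) by (simp add: m_assoc)
      then show ?thesis using 2 mem ab subgroup.m_closed[OF K] by simp
    next
      case 3
      have "a \<otimes> b \<otimes> inv g = (a \<otimes> inv g) \<otimes> (g \<otimes> b \<otimes> inv g)"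
        using ab g(1) by (simp add: m_assoc)
      then show ?thesis using 3 mem ab normalizes subgroup.m_closed[OF K] by simp
    next
      case 4
      have "a \<otimes> b = (a \<otimes> inv g) \<otimes> (g \<otimes> (b \<otimes> inv g) \<otimes> inv g) \<otimes> (g \<otimes> g)"
        using ab g(1) by (simp add: m_assoc)
      then show ?thesis using 4 normalizes g(2) mem ab subgroup.m_closed[OF K] by simp
    qed
  qed
qed

lemma card_Un_rcos:
  assumes K: "subgroup K G" and fin: "finite (carrier G)" and g: "g \<in> carrier G" "g \<notin> K"
  shows "card (K \<union> (K #> g)) = 2 * card K"
proof -
  have Kc: "K \<subseteq> carrier G" using subgroup.subset[OF K] .
  have "K \<inter> (K #> g) = {}"
  proof (rule ccontr)
    assume "K \<inter> (K #> g) \<noteq> {}"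
    then obtain x where "x \<in> K \<inter> (K #> g)"
      by blast
    then have x: "x \<in> K" "x \<in> K #> g"
      by simp_all
    then have "x \<otimes> inv g \<in> K"
      using subgroup.rcos_module[OF K is_group g(1)] Kc by auto
    then have "inv (inv x \<otimes> (x \<otimes> inv g)) \<in> K"
      using x(1) K by (simp add: subgroup.m_closed subgroup.m_inv_closed)
    then show False
      using g x(1) Kc by (auto simp: m_assoc[symmetric])
  qed
  moreover have "card (K #> g) = card K"
    using card_rcosets_equal[OF rcosetsI[OF Kc g(1)] Kc] by simp
  moreover have "finite K" "finite (K #> g)"
    using fin Kc r_coset_subset_G[OF Kc g(1)] finite_subset by blast+
  ultimately show ?thesis
    by (simp add: card_Un_disjoint)
qed

lemma two_part_card_subgroup:
  assumes H: "subgroup H G" and fin: "finite (carrier G)"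
  shows "two_part (card H) = 1 \<longleftrightarrow> odd (card H)"
    and "two_part (card H) = two_part (order G) \<longleftrightarrow> odd (card (rcosets H))"
proof -
  have "card H > 0" "card (rcosets H) > 0"
    using lagrange[OF H] fin order_gt_0_iff_finite by (metis mult_eq_0_iff neq0_conv)+
  then show "two_part (card H) = 1 \<longleftrightarrow> odd (card H)"
    and "two_part (card H) = two_part (order G) \<longleftrightarrow> odd (card (rcosets H))"
    using two_part_eq_1_iff two_part_eq_two_part_mult_iff lagrange[OF H] by metis+
qed

end

section \<open>Double cosets\<close>

definition double_coset :: "('g, 'b) monoid_scheme \<Rightarrow> 'g set \<Rightarrow> 'g \<Rightarrow> 'g set" where
  "double_coset G H x = {a \<otimes>\<^bsub>G\<^esub> x \<otimes>\<^bsub>G\<^esub> b | a b. a \<in> H \<and> b \<in> H}"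

definition double_coset_rcosets :: "('g, 'b) monoid_scheme \<Rightarrow> 'g set \<Rightarrow> 'g \<Rightarrow> 'g set set" where
  "double_coset_rcosets G H x = (\<lambda>y. H #>\<^bsub>G\<^esub> y) ` double_coset G H x"

definition double_coset_pair_rcosets :: "('g, 'b) monoid_scheme \<Rightarrow> 'g set \<Rightarrow> 'g \<Rightarrow> 'g set set" where
  "double_coset_pair_rcosets G H x = double_coset_rcosets G H x \<union> double_coset_rcosets G H (inv\<^bsub>G\<^esub> x)"

lemma double_coset_iff:
  "y \<in> double_coset G H x \<longleftrightarrow> (\<exists>a\<in>H. \<exists>b\<in>H. y = a \<otimes>\<^bsub>G\<^esub> x \<otimes>\<^bsub>G\<^esub> b)"
  unfolding double_coset_def by blast

context group
begin

lemma double_coset_subset_carrier: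
  "subgroup H G \<Longrightarrow> x \<in> carrier G \<Longrightarrow> double_coset G H x \<subseteq> carrier G"
  by (auto simp: double_coset_iff subgroup.mem_carrier)

lemma double_coset_self:
  "subgroup H G \<Longrightarrow> x \<in> carrier G \<Longrightarrow> x \<in> double_coset G H x"
  unfolding double_coset_iff by (metis subgroup.one_closed l_one r_one)

lemma double_coset_mult_mem:
  assumes H: "subgroup H G" and x: "x \<in> carrier G"
    and "y \<in> double_coset G H x" "p \<in> H" "q \<in> H"
  shows "p \<otimes> y \<otimes> q \<in> double_coset G H x"
proof -
  obtain a b where ab: "a \<in> H" "b \<in> H" "y = a \<otimes> x \<otimes> b"
    using assms(3) by (auto simp: double_coset_iff)
  have "p \<otimes> y \<otimes> q = (p \<otimes> a) \<otimes> x \<otimes> (b \<otimes> q)"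
    using ab assms(4,5) x H by (simp add: m_assoc subgroup.mem_carrier)
  then show ?thesis
    using ab assms(4,5) H by (auto simp: double_coset_iff intro: subgroup.m_closed)
qed

lemma double_coset_subset:
  assumes H: "subgroup H G" and x: "x \<in> carrier G" and y: "y \<in> double_coset G H x"
  shows "double_coset G H y \<subseteq> double_coset G H x"
  using double_coset_mult_mem[OF H x y] by (auto simp: double_coset_iff[of _ _ _ y])

lemma double_coset_eq:
  assumes H: "subgroup H G" and x: "x \<in> carrier G" and y: "y \<in> double_coset G H x"
  shows "double_coset G H y = double_coset G H x"
proof
  obtain a b where ab: "a \<in> H" "b \<in> H" "y = a \<otimes> x \<otimes> b"
    using y by (auto simp: double_coset_iff)
  have carr: "a \<in> carrier G" "b \<in> carrier G" "y \<in> carrier G"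
    using ab x H by (auto simp: subgroup.mem_carrier)
  have "inv a \<otimes> y \<otimes> inv b \<in> double_coset G H y"
    using ab H by (intro double_coset_mult_mem double_coset_self carr) (auto intro: subgroup.m_inv_closed)
  moreover have "inv a \<otimes> y \<otimes> inv b = x"
    using ab carr x by (simp add: m_assoc)
  ultimately show "double_coset G H x \<subseteq> double_coset G H y"
    using double_coset_subset[OF H carr(3)] by simp
qed (rule double_coset_subset[OF H x y])

lemma inv_mem_double_coset_inv:
  assumes H: "subgroup H G" and x: "x \<in> carrier G" and y: "y \<in> double_coset G H x"
  shows "inv y \<in> double_coset G H (inv x)"
proof -
  obtain a b where ab: "a \<in> H" "b \<in> H" "y = a \<otimes> x \<otimes> b"
    using y by (auto simp: double_coset_iff)
  have carr: "a \<in> carrier G" "b \<in> carrier G"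
    using ab H by (auto simp: subgroup.mem_carrier)
  have "inv y = inv b \<otimes> inv x \<otimes> inv a"
    using ab carr x by (simp add: inv_mult_group m_assoc)
  then show ?thesis
    using ab H by (auto simp: double_coset_iff intro: subgroup.m_inv_closed)
qed

lemma double_coset_inv:
  assumes H: "subgroup H G" and x: "x \<in> carrier G"
  shows "double_coset G H (inv x) = (\<lambda>z. inv z) ` double_coset G H x"
proof
  show "double_coset G H (inv x) \<subseteq> (\<lambda>z. inv z) ` double_coset G H x"
  proof
    fix z assume z: "z \<in> double_coset G H (inv x)"
    then have "inv z \<in> double_coset G H x"
      using inv_mem_double_coset_inv[OF H inv_closed[OF x]] x by simp
    moreover have "z = inv (inv z)"
      using z double_coset_subset_carrier[OF H inv_closed[OF x]] by auto
    ultimately show "z \<in> (\<lambda>z. inv z) ` double_coset G H x" by blast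
  qed
qed (use inv_mem_double_coset_inv[OF H x] in blast)

lemma double_coset_inv_cong:
  assumes H: "subgroup H G" and x: "x \<in> carrier G" and y: "y \<in> carrier G"
    and eq: "double_coset G H x = double_coset G H y"
  shows "double_coset G H (inv x) = double_coset G H (inv y)"
  using double_coset_eq[OF H inv_closed[OF x] inv_mem_double_coset_inv[OF H x]]
    double_coset_self[OF H y] eq by simp

lemma r_coset_subset_double_coset:
  assumes H: "subgroup H G" and x: "x \<in> carrier G" and y: "y \<in> double_coset G H x"
  shows "H #> y \<subseteq> double_coset G H x"
proof
  fix z assume "z \<in> H #> y"
  then obtain h where h: "h \<in> H" "z = h \<otimes> y" unfolding r_coset_def by blast
  have "h \<otimes> y \<otimes> \<one> \<in> double_coset G H x"
    using h H by (intro double_coset_mult_mem[OF H x y]) (auto intro: subgroup.one_closed)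
  then show "z \<in> double_coset G H x"
    using h y double_coset_subset_carrier[OF H x] H by (auto simp: subgroup.mem_carrier)
qed

lemma double_coset_rcosets_subset:
  assumes H: "subgroup H G" and x: "x \<in> carrier G"
  shows "double_coset_rcosets G H x \<subseteq> rcosets H"
  unfolding double_coset_rcosets_def
  using double_coset_subset_carrier[OF H x] by (auto intro: rcosetsI[OF subgroup.subset[OF H]])

lemma double_coset_rcosets_cong:
  assumes H: "subgroup H G" and x: "x \<in> carrier G" and y: "y \<in> carrier G"
    and c: "c \<in> double_coset_rcosets G H x" "c \<in> double_coset_rcosets G H y"
  shows "double_coset G H x = double_coset G H y"
proof -
  obtain u v where u: "u \<in> double_coset G H x" "c = H #> u"
    and v: "v \<in> double_coset G H y" "c = H #> v"
    using c unfolding double_coset_rcosets_def by blast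
  have "u \<in> H #> v"
    using u v rcos_self[of u H] double_coset_subset_carrier[OF H x] H by auto
  then have "u \<in> double_coset G H y"
    using r_coset_subset_double_coset[OF H y v(1)] by blast
  then show ?thesis
    using double_coset_eq[OF H x u(1)] double_coset_eq[OF H y] by simp
qed

lemma ex_inv_pair_in_rcosets:
  assumes H: "subgroup H G" and x: "x \<in> carrier G"
    and y: "y \<in> double_coset G H x" and z: "z \<in> double_coset G H (inv x)"
  shows "\<exists>g\<in>H #> y. inv g \<in> H #> z"
proof -
  have yc: "y \<in> carrier G"
    using y double_coset_subset_carrier[OF H x] by blast
  have "z \<in> double_coset G H (inv y)"
    using double_coset_eq[OF H inv_closed[OF x] inv_mem_double_coset_inv[OF H x y]] z by simp
  then obtain p q where pq: "p \<in> H" "q \<in> H" "z = p \<otimes> inv y \<otimes> q"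
    by (auto simp: double_coset_iff)
  have carr: "p \<in> carrier G" "q \<in> carrier G"
    using pq H by (auto simp: subgroup.mem_carrier)
  have zc: "z \<in> carrier G"
    using z double_coset_subset_carrier[OF H inv_closed[OF x]] by blast
  have "inv q \<otimes> y \<in> H #> y"
    using pq yc by (intro rcosI subgroup.subset[OF H] subgroup.m_inv_closed[OF H])
  moreover have "inv (inv q \<otimes> y) = inv p \<otimes> z"
    using pq carr yc by (simp add: inv_mult_group m_assoc)
  moreover have "inv p \<otimes> z \<in> H #> z"
    using pq zc by (intro rcosI subgroup.subset[OF H] subgroup.m_inv_closed[OF H])
  ultimately show ?thesis by metis
qed

lemma card_double_coset:
  assumes H: "subgroup H G" and fin: "finite (carrier G)" and x: "x \<in> carrier G"
  shows "card (double_coset G H x) = card (double_coset_rcosets G H x) * card H"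
  unfolding double_coset_rcosets_def
  using card_saturated_by_rcosets[OF H fin double_coset_subset_carrier[OF H x]]
    r_coset_subset_double_coset[OF H x] by blast

lemma card_double_coset_rcosets_inv:
  assumes H: "subgroup H G" and fin: "finite (carrier G)" and x: "x \<in> carrier G"
  shows "card (double_coset_rcosets G H (inv x)) = card (double_coset_rcosets G H x)"
proof -
  have "inj_on (\<lambda>z. inv z) (double_coset G H x)"
    using inj_on_subset[OF inv_inj double_coset_subset_carrier[OF H x]] .
  then have "card (double_coset G H (inv x)) = card (double_coset G H x)"
    by (simp add: double_coset_inv[OF H x] card_image)
  moreover have "card H > 0"
    using subgroup.finite_imp_card_positive[OF H] fin subgroup.subset[OF H] by (simp add: finite_subset)
  ultimately show ?thesis
    using card_double_coset[OF H fin] x by simp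
qed

lemma double_coset_rcosets_eq_image:
  assumes H: "subgroup H G" and g: "g \<in> carrier G"
  shows "(\<lambda>b. H #> (g \<otimes> b)) ` H = double_coset_rcosets G H g"
  unfolding double_coset_rcosets_def
proof (intro equalityI subsetI)
  fix c assume "c \<in> (\<lambda>b. H #> (g \<otimes> b)) ` H"
  then obtain b where b: "b \<in> H" "c = H #> (g \<otimes> b)" by blast
  have "\<one> \<otimes> g \<otimes> b \<in> double_coset G H g"
    using b(1) subgroup.one_closed[OF H] unfolding double_coset_iff by blast
  then show "c \<in> (\<lambda>y. H #> y) ` double_coset G H g"
    using b g by simp
next
  fix c assume "c \<in> (\<lambda>y. H #> y) ` double_coset G H g"
  then obtain y where y: "y \<in> double_coset G H g" "c = H #> y"
    by blast
  then obtain a b where ab: "a \<in> H" "b \<in> H" "c = H #> (a \<otimes> g \<otimes> b)"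
    unfolding double_coset_iff by blast
  have abc: "a \<in> carrier G" "b \<in> carrier G"
    using ab subgroup.subset[OF H] by auto
  have "(a \<otimes> g \<otimes> b) \<otimes> inv (g \<otimes> b) = a"
    using abc g by (simp add: m_assoc inv_mult_group)
  then have "c = H #> (g \<otimes> b)"
    using ab abc g rcos_eq_iff[OF H] by simp
  then show "c \<in> (\<lambda>b. H #> (g \<otimes> b)) ` H"
    using ab(2) by blast
qed

text \<open>The set below is \<open>H \<inter> g\<inverse> H g\<close>: this is the classical count
  \<open>|H g H| = |H| |H : H \<inter> g\<inverse> H g|\<close>.\<close>

lemma card_subgroup_eq_card_double_coset_rcosets_mult:
  assumes H: "subgroup H G" and fin: "finite (carrier G)" and g: "g \<in> carrier G"
  shows "card H = card (double_coset_rcosets G H g) * card {k \<in> H. g \<otimes> k \<otimes> inv g \<in> H}"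
proof -
  let ?K = "{k \<in> H. g \<otimes> k \<otimes> inv g \<in> H}"
  have K: "subgroup ?K G"
    using subgroup_conjugate_inter[OF H g] .
  have Hc: "H \<subseteq> carrier G"
    using subgroup.subset[OF H] .
  have "card H = card ((\<lambda>b. ?K #> b) ` H) * card ?K"
  proof (rule card_saturated_by_rcosets[OF K fin Hc])
    show "?K #> b \<subseteq> H" if "b \<in> H" for b
      using that H unfolding r_coset_def by (auto intro: subgroup.m_closed)
  qed
  also have "card ((\<lambda>b. ?K #> b) ` H) = card ((\<lambda>b. H #> (g \<otimes> b)) ` H)"
  proof (rule card_image_eq_if_same_fibres)
    fix a b assume ab: "a \<in> H" "b \<in> H"
    have abc: "a \<in> carrier G" "b \<in> carrier G"
      using ab Hc by auto
    have "?K #> a = ?K #> b \<longleftrightarrow> a \<otimes> inv b \<in> ?K"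
      by (rule rcos_eq_iff[OF K abc])
    also have "\<dots> \<longleftrightarrow> g \<otimes> (a \<otimes> inv b) \<otimes> inv g \<in> H"
      using ab H by (simp add: subgroup.m_closed subgroup.m_inv_closed)
    also have "g \<otimes> (a \<otimes> inv b) \<otimes> inv g = (g \<otimes> a) \<otimes> inv (g \<otimes> b)"
      using g abc by (simp add: m_assoc inv_mult_group)
    also have "\<dots> \<in> H \<longleftrightarrow> H #> (g \<otimes> a) = H #> (g \<otimes> b)"
      using rcos_eq_iff[OF H] g abc by simp
    finally show "?K #> a = ?K #> b \<longleftrightarrow> H #> (g \<otimes> a) = H #> (g \<otimes> b)" .
  qed
  also have "(\<lambda>b. H #> (g \<otimes> b)) ` H = double_coset_rcosets G H g"
    by (rule double_coset_rcosets_eq_image[OF H g])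
  finally show ?thesis .
qed

lemma double_coset_pair_rcosets_subset:
  "subgroup H G \<Longrightarrow> x \<in> carrier G \<Longrightarrow> double_coset_pair_rcosets G H x \<subseteq> rcosets H"
  unfolding double_coset_pair_rcosets_def using double_coset_rcosets_subset by simp

lemma double_coset_pair_rcosets_inv:
  "x \<in> carrier G \<Longrightarrow> double_coset_pair_rcosets G H (inv x) = double_coset_pair_rcosets G H x"
  unfolding double_coset_pair_rcosets_def by (simp add: Un_commute)

lemma double_coset_pair_rcosets_cong:
  assumes H: "subgroup H G" and u: "u \<in> carrier G" and v: "v \<in> carrier G"
    and eq: "double_coset G H u = double_coset G H v"
  shows "double_coset_pair_rcosets G H u = double_coset_pair_rcosets G H v"
proof -
  have "double_coset G H (inv u) = double_coset G H (inv v)"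
    by (rule double_coset_inv_cong[OF H u v eq])
  then show ?thesis
    using eq unfolding double_coset_pair_rcosets_def double_coset_rcosets_def by simp
qed

lemma Union_double_coset_pair_rcosets:
  assumes H: "subgroup H G"
  shows "\<Union>(double_coset_pair_rcosets G H ` carrier G) = rcosets H"
proof
  show "rcosets H \<subseteq> \<Union>(double_coset_pair_rcosets G H ` carrier G)"
  proof
    fix c assume "c \<in> rcosets H"
    then obtain y where y: "y \<in> carrier G" "c = H #> y"
      unfolding RCOSETS_def by blast
    then have "c \<in> double_coset_pair_rcosets G H y"
      using double_coset_self[OF H]
      unfolding double_coset_pair_rcosets_def double_coset_rcosets_def by blast
    then show "c \<in> \<Union>(double_coset_pair_rcosets G H ` carrier G)"
      using y(1) by blast
  qed
qed (use double_coset_pair_rcosets_subset[OF H] in blast)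

lemma disjoint_double_coset_pair_rcosets:
  assumes H: "subgroup H G"
  shows "pairwise disjnt (double_coset_pair_rcosets G H ` carrier G)"
proof (rule pairwise_imageI)
  fix x y assume xy: "x \<in> carrier G" "y \<in> carrier G"
    and ne: "double_coset_pair_rcosets G H x \<noteq> double_coset_pair_rcosets G H y"
  show "disjnt (double_coset_pair_rcosets G H x) (double_coset_pair_rcosets G H y)"
  proof (rule ccontr)
    assume "\<not> ?thesis"
    then obtain c u v where uv: "u \<in> {x, inv x}" "v \<in> {y, inv y}"
      and c: "c \<in> double_coset_rcosets G H u" "c \<in> double_coset_rcosets G H v"
      unfolding double_coset_pair_rcosets_def disjnt_def by blast
    have uv_carrier: "u \<in> carrier G" "v \<in> carrier G"
      and "double_coset_pair_rcosets G H u = double_coset_pair_rcosets G H x"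
        "double_coset_pair_rcosets G H v = double_coset_pair_rcosets G H y"
      using uv xy double_coset_pair_rcosets_inv by auto
    moreover have "double_coset_pair_rcosets G H u = double_coset_pair_rcosets G H v"
      using double_coset_pair_rcosets_cong[OF H uv_carrier double_coset_rcosets_cong[OF H uv_carrier c]] .
    ultimately show False
      using ne by metis
  qed
qed

lemma square_in_subgroup_if_self_inverse_double_coset:
  assumes H: "subgroup H G" and x: "x \<in> carrier G" and self_inv: "inv x \<in> double_coset G H x"
  obtains g where "g \<in> H #> x" "g \<otimes> g \<in> H"
proof -
  have "x \<in> double_coset G H (inv x)"
    using inv_mem_double_coset_inv[OF H x self_inv] x by simp
  then obtain g where g: "g \<in> H #> x" "inv g \<in> H #> x"
    using ex_inv_pair_in_rcosets[OF H x double_coset_self[OF H x]] by blast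
  have gc: "g \<in> carrier G"
    using g(1) r_coset_subset_G[OF subgroup.subset[OF H] x] by blast
  have "inv g \<in> H #> g"
    using g repr_independence[OF g(1) x H] by simp
  then have "inv (inv g \<otimes> inv g) \<in> H"
    using subgroup.rcos_module[OF H is_group gc] subgroup.m_inv_closed[OF H] gc by simp
  then have "g \<otimes> g \<in> H"
    using gc by (simp add: inv_mult_group)
  then show thesis using that g(1) by blast
qed

end

section \<open>Inverse-closed transversals\<close>

definition inv_closed_transversal :: "('g, 'b) monoid_scheme \<Rightarrow> 'g set set \<Rightarrow> 'g set \<Rightarrow> bool" where
  "inv_closed_transversal G X T \<longleftrightarrow>
     T \<subseteq> \<Union>X \<and> (\<forall>t\<in>T. inv\<^bsub>G\<^esub> t \<in> T) \<and> (\<forall>c\<in>X. \<exists>!t. t \<in> T \<and> t \<in> c)"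

context group
begin

lemma inv_closed_transversalD:
  assumes "inv_closed_transversal G X T"
  shows "T \<subseteq> \<Union>X" and "t \<in> T \<Longrightarrow> inv t \<in> T" and "c \<in> X \<Longrightarrow> \<exists>!t. t \<in> T \<and> t \<in> c"
  using assms by (simp_all add: inv_closed_transversal_def)

lemma cayley_adj_iff:
  assumes "S \<subseteq> carrier G" and "\<forall>s\<in>S. inv s \<in> S"
  shows "cayley_adj G S x y \<longleftrightarrow> x \<in> carrier G \<and> y \<in> carrier G \<and> y \<otimes> inv x \<in> S"
proof -
  have "y = s \<otimes> x \<or> x = s \<otimes> y \<longleftrightarrow> y \<otimes> inv x = s \<or> y \<otimes> inv x = inv s"
    if "x \<in> carrier G" "y \<in> carrier G" "s \<in> carrier G" for s
    using that by (simp add: inv_solve_right' inv_solve_left)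
  moreover have "(\<exists>s\<in>S. z = s \<or> z = inv s) \<longleftrightarrow> z \<in> S" for z
    using assms(2) by blast
  ultimately show ?thesis
    unfolding cayley_adj_def using assms(1) by blast
qed

lemma cayley_independent_subgroup_iff:
  assumes H: "subgroup H G" and S: "S \<subseteq> carrier G" "\<forall>s\<in>S. inv s \<in> S"
  shows "(\<forall>x\<in>H. \<forall>y\<in>H. \<not> cayley_adj G S x y) \<longleftrightarrow> S \<inter> H = {}"
proof
  assume indep: "\<forall>x\<in>H. \<forall>y\<in>H. \<not> cayley_adj G S x y"
  show "S \<inter> H = {}"
  proof (rule ccontr)
    assume "S \<inter> H \<noteq> {}"
    then obtain s where s: "s \<in> S" "s \<in> H" by blast
    then have "cayley_adj G S \<one> s"
      using cayley_adj_iff[OF S, of \<one> s] subgroup.mem_carrier[OF H] by auto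
    then show False
      using indep subgroup.one_closed[OF H] s(2) by blast
  qed
next
  assume disj: "S \<inter> H = {}"
  show "\<forall>x\<in>H. \<forall>y\<in>H. \<not> cayley_adj G S x y"
  proof (intro ballI)
    fix x y assume "x \<in> H" "y \<in> H"
    then have "y \<otimes> inv x \<in> H"
      using H by (simp add: subgroup.m_closed subgroup.m_inv_closed)
    then show "\<not> cayley_adj G S x y"
      using cayley_adj_iff[OF S, of x y] disj by blast
  qed
qed

lemma cayley_unique_neighbour_subgroup_iff:
  assumes H: "subgroup H G" and S: "S \<subseteq> carrier G" "\<forall>s\<in>S. inv s \<in> S"
  shows "(\<forall>x\<in>carrier G - H. \<exists>!c. c \<in> H \<and> cayley_adj G S x c) \<longleftrightarrow>
    (\<forall>y\<in>carrier G - H. \<exists>!t. t \<in> S \<and> t \<in> H #> y)"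
proof -
  have neighbour_iff: "(\<exists>!c. c \<in> H \<and> cayley_adj G S x c) \<longleftrightarrow> (\<exists>!t. t \<in> S \<and> t \<in> H #> inv x)"
    if x: "x \<in> carrier G" for x
  proof -
    have "(\<lambda>c. c \<in> H \<and> cayley_adj G S x c) = (\<lambda>c. c \<in> H \<and> c \<otimes> inv x \<in> S)"
      using cayley_adj_iff[OF S, of x] x subgroup.mem_carrier[OF H] by (intro ext) auto
    then show ?thesis
      using rcos_ex1_iff[OF H inv_closed[OF x]] by simp
  qed
  have inv_outside: "inv x \<in> carrier G - H" if "x \<in> carrier G - H" for x
    using that subgroup.m_inv_closed[OF H, of "inv x"] by auto
  show ?thesis
  proof (intro iffI ballI)
    fix y assume "\<forall>x\<in>carrier G - H. \<exists>!c. c \<in> H \<and> cayley_adj G S x c" "y \<in> carrier G - H"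
    then show "\<exists>!t. t \<in> S \<and> t \<in> H #> y"
      using neighbour_iff[of "inv y"] inv_outside[of y] by simp
  next
    fix x assume "\<forall>y\<in>carrier G - H. \<exists>!t. t \<in> S \<and> t \<in> H #> y" "x \<in> carrier G - H"
    then show "\<exists>!c. c \<in> H \<and> cayley_adj G S x c"
      using neighbour_iff[of x] inv_outside[of x] by simp
  qed
qed

lemma cayley_perfect_code_subgroup_iff:
  assumes H: "subgroup H G" and S: "S \<subseteq> carrier G" "\<forall>s\<in>S. inv s \<in> S"
  shows "cayley_perfect_code G S H \<longleftrightarrow>
    S \<inter> H = {} \<and> (\<forall>y\<in>carrier G - H. \<exists>!t. t \<in> S \<and> t \<in> H #> y)"
proof -
  have "cayley_perfect_code G S H \<longleftrightarrow> (\<forall>x\<in>H. \<forall>y\<in>H. \<not> cayley_adj G S x y) \<and>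
      (\<forall>x\<in>carrier G - H. \<exists>!c. c \<in> H \<and> cayley_adj G S x c)"
    unfolding cayley_perfect_code_def using subgroup.subset[OF H] by simp
  then show ?thesis
    using cayley_independent_subgroup_iff[OF H S] cayley_unique_neighbour_subgroup_iff[OF H S] by simp
qed

lemma subgroup_perfect_code_imp_inv_closed_transversal:
  assumes "subgroup_perfect_code G H"
  shows "\<exists>T. inv_closed_transversal G (rcosets H) T"
proof -
  have H: "subgroup H G"
    using assms unfolding subgroup_perfect_code_def by simp
  obtain S where S: "S \<subseteq> carrier G - {\<one>}" "\<forall>s\<in>S. inv s \<in> S" and pc: "cayley_perfect_code G S H"
    using assms unfolding subgroup_perfect_code_def by blast
  have Sc: "S \<subseteq> carrier G"
    using S(1) by blast
  note pc_iff = iffD1[OF cayley_perfect_code_subgroup_iff[OF H Sc S(2)] pc]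
  note disj = conjunct1[OF pc_iff] and uniq = conjunct2[OF pc_iff]
  have "\<exists>!t. t \<in> insert \<one> S \<and> t \<in> c" if c: "c \<in> rcosets H" for c
  proof -
    obtain y where y: "y \<in> carrier G" "c = H #> y"
      using c unfolding RCOSETS_def by blast
    show ?thesis
    proof (cases "y \<in> H")
      case True
      then have "c = H"
        using y(2) subgroup.rcos_const[OF H is_group True] by simp
      show ?thesis
      proof (rule ex1I[of _ \<one>])
        show "\<one> \<in> insert \<one> S \<and> \<one> \<in> c"
          using \<open>c = H\<close> subgroup.one_closed[OF H] by simp
        show "t = \<one>" if "t \<in> insert \<one> S \<and> t \<in> c" for t
          using that disj \<open>c = H\<close> by auto
      qed
    next
      case False
      then have "\<one> \<notin> c"
        using Int_rcos_eq_empty[OF H y(1) False] subgroup.one_closed[OF H] y(2)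
        by (simp add: disjoint_iff)
      then have "(\<lambda>t. t \<in> insert \<one> S \<and> t \<in> c) = (\<lambda>t. t \<in> S \<and> t \<in> H #> y)"
        using y(2) by auto
      then show ?thesis
        using uniq y(1) False by simp
    qed
  qed
  moreover have "insert \<one> S \<subseteq> \<Union>(rcosets H)"
    using Sc rcosets_part_G[OF H] by simp
  moreover have "\<forall>t\<in>insert \<one> S. inv t \<in> insert \<one> S"
    using S(2) by simp
  ultimately have "inv_closed_transversal G (rcosets H) (insert \<one> S)"
    unfolding inv_closed_transversal_def by simp
  then show ?thesis ..
qed

lemma inv_closed_transversal_imp_subgroup_perfect_code:
  assumes H: "subgroup H G" and T: "inv_closed_transversal G (rcosets H) T"
  shows "subgroup_perfect_code G H"
proof -
  note TD = inv_closed_transversalD[OF T]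
  let ?S = "T - H"
  have Tc: "T \<subseteq> carrier G"
    using TD(1) rcosets_part_G[OF H] by simp
  have S_inv: "inv s \<in> ?S" if "s \<in> ?S" for s
    using that Tc TD(2) subgroup.m_inv_closed[OF H, of "inv s"] by auto
  have S: "?S \<subseteq> carrier G - {\<one>}" "\<forall>s\<in>?S. inv s \<in> ?S"
    using Tc subgroup.one_closed[OF H] S_inv by blast+
  have "\<exists>!t. t \<in> ?S \<and> t \<in> H #> y" if y: "y \<in> carrier G" "y \<notin> H" for y
  proof -
    have "t \<notin> H" if "t \<in> H #> y" for t
      using that Int_rcos_eq_empty[OF H y] by blast
    then have "(\<lambda>t. t \<in> ?S \<and> t \<in> H #> y) = (\<lambda>t. t \<in> T \<and> t \<in> H #> y)"
      by auto
    then show ?thesis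
      using TD(3)[OF rcosetsI[OF subgroup.subset[OF H] y(1)]] by simp
  qed
  then have "cayley_perfect_code G ?S H"
    using cayley_perfect_code_subgroup_iff[OF H _ S(2)] S(1) by auto
  then show ?thesis
    unfolding subgroup_perfect_code_def using H S by blast
qed

theorem subgroup_perfect_code_iff_inv_closed_transversal:
  assumes "subgroup H G"
  shows "subgroup_perfect_code G H \<longleftrightarrow> (\<exists>T. inv_closed_transversal G (rcosets H) T)"
  using assms inv_closed_transversal_imp_subgroup_perfect_code
    subgroup_perfect_code_imp_inv_closed_transversal by blast

lemma card_inv_closed_transversal:
  assumes H: "subgroup H G" and T: "inv_closed_transversal G (rcosets H) T"
  shows "card T = card (rcosets H)"
proof -
  note TD = inv_closed_transversalD[OF T]
  have "bij_betw (\<lambda>t. H #> t) T (rcosets H)"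
  proof (rule bij_betwI')
    fix t t' assume tt': "t \<in> T" "t' \<in> T"
    then have carr: "t \<in> carrier G" "t' \<in> carrier G"
      using TD(1) rcosets_part_G[OF H] by blast+
    show "H #> t = H #> t' \<longleftrightarrow> t = t'"
    proof
      assume eq: "H #> t = H #> t'"
      have "t \<in> H #> t" "t' \<in> H #> t"
        using rcos_self[OF _ H] carr eq by auto
      then show "t = t'"
        using TD(3)[OF rcosetsI[OF subgroup.subset[OF H] carr(1)]] tt' by blast
    qed simp
  next
    fix t assume "t \<in> T"
    then show "H #> t \<in> rcosets H"
      using TD(1) rcosets_part_G[OF H] rcosetsI[OF subgroup.subset[OF H]] by blast
  next
    fix c assume c: "c \<in> rcosets H"
    then obtain y where y: "y \<in> carrier G" "c = H #> y"
      unfolding RCOSETS_def by blast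
    obtain t where t: "t \<in> T" "t \<in> H #> y"
      using TD(3)[OF c] y(2) by blast
    then show "\<exists>t\<in>T. c = H #> t"
      using repr_independence[OF t(2) y(1) H] y(2) by blast
  qed
  then show ?thesis by (rule bij_betw_same_card)
qed

lemma inv_closed_transversal_Union:
  assumes H: "subgroup H G"
    and sub: "\<And>X. X \<in> \<X> \<Longrightarrow> X \<subseteq> rcosets H" and disj: "pairwise disjnt \<X>"
    and ex: "\<And>X. X \<in> \<X> \<Longrightarrow> \<exists>T. inv_closed_transversal G X T"
  shows "\<exists>T. inv_closed_transversal G (\<Union>\<X>) T"
proof -
  obtain \<tau> where \<tau>: "\<And>X. X \<in> \<X> \<Longrightarrow> inv_closed_transversal G X (\<tau> X)"
    using ex by metis
  note \<tau>D = inv_closed_transversalD[OF \<tau>]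
  have same_block: "Y = X" if XY: "X \<in> \<X>" "Y \<in> \<X>" and t: "c \<in> X" "t \<in> c" "t \<in> \<tau> Y" for X Y c t
  proof -
    obtain c' where c': "c' \<in> Y" "t \<in> c'"
      using \<tau>D(1)[OF XY(2)] t(3) by blast
    then have "c' = c"
      using rcosets_eqI[OF H _ _ c'(2) t(2)] sub XY t(1) by blast
    then show ?thesis
      using disj XY c' t(1) unfolding pairwise_def disjnt_def by blast
  qed
  have "inv_closed_transversal G (\<Union>\<X>) (\<Union>X\<in>\<X>. \<tau> X)"
    unfolding inv_closed_transversal_def
  proof (intro conjI ballI)
    show "(\<Union>X\<in>\<X>. \<tau> X) \<subseteq> \<Union>(\<Union>\<X>)"
      using \<tau>D(1) by blast
    show "inv t \<in> (\<Union>X\<in>\<X>. \<tau> X)" if "t \<in> (\<Union>X\<in>\<X>. \<tau> X)" for t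
      using \<tau>D(2) that by blast
  next
    fix c assume "c \<in> \<Union>\<X>"
    then obtain X where X: "X \<in> \<X>" "c \<in> X" by blast
    then obtain t where t: "t \<in> \<tau> X" "t \<in> c" and unique: "\<And>t'. t' \<in> \<tau> X \<Longrightarrow> t' \<in> c \<Longrightarrow> t' = t"
      using \<tau>D(3)[OF X] by (elim ex1E) blast
    show "\<exists>!t. t \<in> (\<Union>X\<in>\<X>. \<tau> X) \<and> t \<in> c"
    proof (rule ex1I[of _ t])
      show "t \<in> (\<Union>X\<in>\<X>. \<tau> X) \<and> t \<in> c"
        using X t by blast
    next
      fix t' assume "t' \<in> (\<Union>X\<in>\<X>. \<tau> X) \<and> t' \<in> c"
      then obtain Y where "Y \<in> \<X>" "t' \<in> \<tau> Y" "t' \<in> c" by blast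
      then show "t' = t"
        using same_block[OF X(1) _ X(2)] unique by blast
    qed
  qed
  then show ?thesis by blast
qed

lemma inv_closed_transversal_pair:
  assumes H: "subgroup H G" and c: "c \<in> rcosets H" "c' \<in> rcosets H" "c \<noteq> c'"
    and g: "g \<in> c" "inv g \<in> c'"
  shows "inv_closed_transversal G {c, c'} {g, inv g}"
proof -
  have "g \<in> carrier G"
    using g c rcosets_part_G[OF H] by blast
  moreover have "g \<notin> c'" "inv g \<notin> c"
    using rcosets_eqI[OF H] c g by blast+
  ultimately show ?thesis
    unfolding inv_closed_transversal_def using g by auto
qed

lemma inv_closed_transversal_singleton:
  assumes H: "subgroup H G" and y: "y \<in> carrier G" "y \<otimes> y = \<one>"
  shows "inv_closed_transversal G {H #> y} {y}"
  using rcos_self[OF y(1) H] inv_equality[OF y(2) y(1) y(1)]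
  unfolding inv_closed_transversal_def by auto

lemma inv_closed_transversal_matching:
  assumes H: "subgroup H G" and fin: "finite (carrier G)"
    and AB: "A \<subseteq> rcosets H" "B \<subseteq> rcosets H" "A \<inter> B = {}" "card A = card B"
    and linked: "\<And>c c'. c \<in> A \<Longrightarrow> c' \<in> B \<Longrightarrow> \<exists>g\<in>c. inv g \<in> c'"
  shows "\<exists>T. inv_closed_transversal G (A \<union> B) T"
proof -
  have "finite A" "finite B"
    using finite_rcosets[OF H fin] AB(1,2) finite_subset by blast+
  then obtain f where "bij_betw f A B"
    using finite_same_card_bij AB(4) by blast
  then have f_image: "f ` A = B" and f_inj: "inj_on f A"
    unfolding bij_betw_def by simp_all
  let ?\<P> = "(\<lambda>c. {c, f c}) ` A"
  have "A \<union> B = \<Union>?\<P>"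
    using f_image by blast
  moreover have "pairwise disjnt ?\<P>"
    using f_image f_inj AB(3) unfolding pairwise_def disjnt_def inj_on_def by blast
  moreover have "\<exists>T. inv_closed_transversal G P T" if P: "P \<in> ?\<P>" for P
  proof -
    obtain c where c: "c \<in> A" "P = {c, f c}"
      using P by (rule imageE)
    have fc: "f c \<in> B"
      using f_image c(1) by blast
    obtain g where "g \<in> c" "inv g \<in> f c"
      using linked[OF c(1) fc] by blast
    moreover have "c \<noteq> f c"
      using AB(3) c(1) fc by (metis disjoint_iff)
    ultimately have "inv_closed_transversal G {c, f c} {g, inv g}"
      using AB(1,2) c(1) fc by (intro inv_closed_transversal_pair[OF H]) auto
    then show ?thesis
      using c(2) by blast
  qed
  moreover have "P \<subseteq> rcosets H" if "P \<in> ?\<P>" for P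
    using that f_image AB(1,2) by blast
  ultimately show ?thesis
    using inv_closed_transversal_Union[OF H, of ?\<P>] by simp
qed

lemma inv_closed_transversal_linked_even:
  assumes H: "subgroup H G" and fin: "finite (carrier G)"
    and X: "X \<subseteq> rcosets H" "even (card X)"
    and linked: "\<And>c c'. c \<in> X \<Longrightarrow> c' \<in> X \<Longrightarrow> \<exists>g\<in>c. inv g \<in> c'"
  shows "\<exists>T. inv_closed_transversal G X T"
proof -
  have "finite X"
    using finite_rcosets[OF H fin] X(1) finite_subset by blast
  then obtain A where A: "A \<subseteq> X" "card A = card X div 2"
    using obtain_subset_with_card_n[of "card X div 2" X] by auto
  have "card (X - A) = card A"
    using A X(2) \<open>finite X\<close> by (simp add: card_Diff_subset finite_subset, presburger)
  then have "\<exists>T. inv_closed_transversal G (A \<union> (X - A)) T"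
    using A X(1) linked by (intro inv_closed_transversal_matching[OF H fin]) auto
  moreover have "A \<union> (X - A) = X" using A(1) by blast
  ultimately show ?thesis by simp
qed

lemma inv_closed_transversal_double_coset_pair:
  assumes H: "subgroup H G" and fin: "finite (carrier G)" and x: "x \<in> carrier G"
    and not_self_inv: "inv x \<notin> double_coset G H x"
  shows "\<exists>T. inv_closed_transversal G (double_coset_rcosets G H x \<union> double_coset_rcosets G H (inv x)) T"
proof (rule inv_closed_transversal_matching[OF H fin])
  show "double_coset_rcosets G H x \<subseteq> rcosets H" "double_coset_rcosets G H (inv x) \<subseteq> rcosets H"
    using double_coset_rcosets_subset[OF H] x by simp_all
  show "card (double_coset_rcosets G H x) = card (double_coset_rcosets G H (inv x))"
    using card_double_coset_rcosets_inv[OF H fin x] by simp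
  show "double_coset_rcosets G H x \<inter> double_coset_rcosets G H (inv x) = {}"
    using double_coset_rcosets_cong[OF H x inv_closed[OF x]] double_coset_self[OF H inv_closed[OF x]]
      not_self_inv by blast
  show "\<exists>g\<in>c. inv g \<in> c'"
    if "c \<in> double_coset_rcosets G H x" "c' \<in> double_coset_rcosets G H (inv x)" for c c'
    using that ex_inv_pair_in_rcosets[OF H x] unfolding double_coset_rcosets_def by blast
qed

lemma inv_closed_transversal_self_inverse_double_coset:
  assumes H: "subgroup H G" and fin: "finite (carrier G)" and x: "x \<in> carrier G"
    and self_inv: "inv x \<in> double_coset G H x"
    and involution: "odd (card (double_coset_rcosets G H x)) \<Longrightarrow> \<exists>y\<in>double_coset G H x. y \<otimes> y = \<one>"
  shows "\<exists>T. inv_closed_transversal G (double_coset_rcosets G H x) T"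
proof -
  let ?R = "double_coset_rcosets G H x"
  have R: "?R \<subseteq> rcosets H" "finite ?R"
    using double_coset_rcosets_subset[OF H x] finite_rcosets[OF H fin] finite_subset by blast+
  have "\<exists>g\<in>c. inv g \<in> c'" if "c \<in> ?R" "c' \<in> ?R" for c c'
    using that ex_inv_pair_in_rcosets[OF H x] double_coset_eq[OF H x self_inv]
    unfolding double_coset_rcosets_def by blast
  then have even_case: "\<exists>T. inv_closed_transversal G X T" if "X \<subseteq> ?R" "even (card X)" for X
    using that R(1) by (intro inv_closed_transversal_linked_even[OF H fin]) auto
  show ?thesis
  proof (cases "even (card ?R)")
    case True
    then show ?thesis using even_case by blast
  next
    case False
    then obtain y where y: "y \<in> double_coset G H x" "y \<otimes> y = \<one>"
      using involution by blast
    have yc: "y \<in> carrier G"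
      using y(1) double_coset_subset_carrier[OF H x] by blast
    let ?c = "H #> y"
    have c: "?c \<in> ?R"
      using y(1) unfolding double_coset_rcosets_def by blast
    have "even (card (?R - {?c}))"
      using False c R(2) by (simp add: card_Diff_singleton_if)
    then have "\<exists>T. inv_closed_transversal G (?R - {?c}) T"
      by (intro even_case) auto
    moreover have "inv_closed_transversal G {?c} {y}"
      using inv_closed_transversal_singleton[OF H yc y(2)] .
    moreover have "pairwise disjnt {?R - {?c}, {?c}}"
      by (simp add: pairwise_insert disjnt_def)
    moreover have "\<Union>{?R - {?c}, {?c}} = ?R"
      using c by blast
    ultimately show ?thesis
      using inv_closed_transversal_Union[OF H, of "{?R - {?c}, {?c}}"] R(1) c by auto
  qed
qed

lemma inv_closed_transversal_double_coset_pair_rcosets: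
  assumes H: "subgroup H G" and fin: "finite (carrier G)" and x: "x \<in> carrier G"
    and involution: "inv x \<in> double_coset G H x \<Longrightarrow> odd (card (double_coset_rcosets G H x)) \<Longrightarrow>
      \<exists>y\<in>double_coset G H x. y \<otimes> y = \<one>"
  shows "\<exists>T. inv_closed_transversal G (double_coset_pair_rcosets G H x) T"
proof (cases "inv x \<in> double_coset G H x")
  case True
  then have "double_coset_pair_rcosets G H x = double_coset_rcosets G H x"
    using double_coset_eq[OF H x True]
    unfolding double_coset_pair_rcosets_def double_coset_rcosets_def by simp
  then show ?thesis
    using inv_closed_transversal_self_inverse_double_coset[OF H fin x True involution[OF True]] by simp
next
  case False
  then show ?thesis
    using inv_closed_transversal_double_coset_pair[OF H fin x]
    unfolding double_coset_pair_rcosets_def by simp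
qed

theorem subgroup_perfect_code_if_double_coset_involutions:
  assumes H: "subgroup H G" and fin: "finite (carrier G)"
    and involution: "\<And>x. x \<in> carrier G \<Longrightarrow> inv x \<in> double_coset G H x \<Longrightarrow>
      odd (card (double_coset_rcosets G H x)) \<Longrightarrow> \<exists>y\<in>double_coset G H x. y \<otimes> y = \<one>"
  shows "subgroup_perfect_code G H"
proof -
  have "\<exists>T. inv_closed_transversal G (\<Union>(double_coset_pair_rcosets G H ` carrier G)) T"
    using double_coset_pair_rcosets_subset[OF H] disjoint_double_coset_pair_rcosets[OF H]
      inv_closed_transversal_double_coset_pair_rcosets[OF H fin _ involution]
    by (intro inv_closed_transversal_Union[OF H]) auto
  then show ?thesis
    using subgroup_perfect_code_iff_inv_closed_transversal[OF H] Union_double_coset_pair_rcosets[OF H]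
    by simp
qed

lemma involution_in_rcoset_if_odd_power:
  assumes H: "subgroup H G" and g: "g \<in> carrier G" "g \<otimes> g \<in> H"
    and m: "odd (m::nat)" "(g \<otimes> g) [^] m = \<one>"
  shows "g [^] m \<in> H #> g" and "g [^] m \<otimes> g [^] m = \<one>"
proof -
  obtain k where k: "m = 2 * k + 1" using m(1) oddE by blast
  have g2: "g \<otimes> g = g [^] (2::nat)"
    using g by (simp add: numeral_2_eq_2)
  have "g [^] m = (g \<otimes> g) [^] k \<otimes> g"
    using g g2 k by (simp add: nat_pow_pow)
  moreover have "(g \<otimes> g) [^] k \<in> H"
    using subgroup_int_pow_closed[OF H g(2), of "int k"] by (simp add: int_pow_int)
  ultimately show "g [^] m \<in> H #> g"
    using rcosI[OF _ subgroup.subset[OF H] g(1)] by simp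
  have "g [^] m \<otimes> g [^] m = (g \<otimes> g) [^] m"
    using g g2 by (simp add: nat_pow_mult nat_pow_pow mult_2[symmetric])
  then show "g [^] m \<otimes> g [^] m = \<one>"
    using m(2) by simp
qed

lemma subgroup_perfect_code_if_odd_power_of_squares:
  assumes H: "subgroup H G" and fin: "finite (carrier G)" and m: "odd (m::nat)"
    and odd_power: "\<And>g. g \<in> carrier G \<Longrightarrow> g \<otimes> g \<in> H \<Longrightarrow> (g \<otimes> g) [^] m = \<one>"
  shows "subgroup_perfect_code G H"
proof (rule subgroup_perfect_code_if_double_coset_involutions[OF H fin])
  fix x assume x: "x \<in> carrier G" and self_inv: "inv x \<in> double_coset G H x"
  obtain g where g: "g \<in> H #> x" "g \<otimes> g \<in> H"
    using square_in_subgroup_if_self_inverse_double_coset[OF H x self_inv] .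
  have gc: "g \<in> carrier G"
    using g(1) r_coset_subset_G[OF subgroup.subset[OF H] x] by blast
  have "H #> g \<subseteq> double_coset G H x"
    using r_coset_subset_double_coset[OF H x double_coset_self[OF H x]]
      repr_independence[OF g(1) x H] by simp
  then show "\<exists>y\<in>double_coset G H x. y \<otimes> y = \<one>"
    using involution_in_rcoset_if_odd_power[OF H gc g(2) m odd_power[OF gc g(2)]] by blast
qed

theorem subgroup_perfect_code_if_odd_order:
  assumes H: "subgroup H G" and fin: "finite (carrier G)" and odd: "odd (card H)"
  shows "subgroup_perfect_code G H"
  using subgroup_perfect_code_if_odd_power_of_squares[OF H fin odd] subgroup_pow_card_eq_one[OF H]
  by blast

text \<open>If \<open>g\<^sup>2 \<in> H\<close> with \<open>g \<notin> H\<close>, then \<open>g\<close> normalises \<open>K = H \<inter> g\<inverse> H g\<close> and \<open>K \<union> K g\<close> is a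
  subgroup of order \<open>2 |K|\<close>; comparing with \<open>|G| = |G : H| |H g H : H| |K|\<close> gives the claim.\<close>

lemma even_index_mult_card_double_coset_rcosets:
  assumes H: "subgroup H G" and fin: "finite (carrier G)" and x: "x \<in> carrier G" "x \<notin> H"
    and self_inv: "inv x \<in> double_coset G H x"
  shows "even (card (rcosets H) * card (double_coset_rcosets G H x))"
proof -
  obtain g where g: "g \<in> H #> x" "g \<otimes> g \<in> H"
    using square_in_subgroup_if_self_inverse_double_coset[OF H x(1) self_inv] .
  have gc: "g \<in> carrier G"
    using g(1) r_coset_subset_G[OF subgroup.subset[OF H] x(1)] by blast
  have Hg: "H #> g = H #> x"
    using repr_independence[OF g(1) x(1) H] by simp
  have "g \<notin> H"
    using Hg x subgroup.rcos_const[OF H is_group] rcos_self[OF x(1) H] by auto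
  have "double_coset G H g = double_coset G H x"
    using double_coset_eq[OF H x(1)] r_coset_subset_double_coset[OF H x(1) double_coset_self[OF H x(1)]] g(1)
    by blast
  then have R: "double_coset_rcosets G H g = double_coset_rcosets G H x"
    unfolding double_coset_rcosets_def by simp
  define K where "K = {k \<in> H. g \<otimes> k \<otimes> inv g \<in> H}"
  have K: "subgroup K G"
    unfolding K_def using subgroup_conjugate_inter[OF H gc] .
  have "g \<otimes> g \<in> K"
    using g(2) gc unfolding K_def by (simp add: m_assoc)
  moreover have "g \<otimes> k \<otimes> inv g \<in> K" if "k \<in> K" for k
  proof -
    have "g \<otimes> (g \<otimes> k \<otimes> inv g) \<otimes> inv g = (g \<otimes> g) \<otimes> k \<otimes> inv (g \<otimes> g)"
      using that gc H unfolding K_def by (simp add: m_assoc inv_mult_group subgroup.mem_carrier)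
    then show ?thesis
      using that g(2) H unfolding K_def by (simp add: subgroup.m_closed subgroup.m_inv_closed)
  qed
  ultimately have M: "subgroup (K \<union> (K #> g)) G"
    using subgroup_Un_rcos[OF K gc] by blast
  have "g \<notin> K" using \<open>g \<notin> H\<close> unfolding K_def by blast
  have "card (rcosets H) * card (double_coset_rcosets G H x) * card K
        = card (rcosets (K \<union> (K #> g))) * 2 * card K"
    using lagrange[OF H] lagrange[OF M] card_Un_rcos[OF K fin gc \<open>g \<notin> K\<close>]
      card_subgroup_eq_card_double_coset_rcosets_mult[OF H fin gc] R
    unfolding K_def by (simp add: mult.assoc)
  moreover have "card K > 0"
    using subgroup.finite_imp_card_positive[OF K] fin subgroup.subset[OF K] by (simp add: finite_subset)
  ultimately show ?thesis
    by simp
qed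

theorem subgroup_perfect_code_if_odd_index:
  assumes H: "subgroup H G" and fin: "finite (carrier G)" and odd: "odd (card (rcosets H))"
  shows "subgroup_perfect_code G H"
proof (rule subgroup_perfect_code_if_double_coset_involutions[OF H fin])
  fix x assume x: "x \<in> carrier G" and self_inv: "inv x \<in> double_coset G H x"
    and "odd (card (double_coset_rcosets G H x))"
  then have "x \<in> H"
    using even_index_mult_card_double_coset_rcosets[OF H fin x _ self_inv] odd by auto
  then have "inv x \<otimes> x \<otimes> \<one> \<in> double_coset G H x"
    using H unfolding double_coset_iff by (blast intro: subgroup.m_inv_closed subgroup.one_closed)
  then show "\<exists>y\<in>double_coset G H x. y \<otimes> y = \<one>"
    using x by force
qed

theorem odd_index_if_involutions_in_subgroup:
  assumes H: "subgroup H G" and fin: "finite (carrier G)"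
    and T: "inv_closed_transversal G (rcosets H) T"
    and involutions: "\<And>t. t \<in> carrier G \<Longrightarrow> t \<otimes> t = \<one> \<Longrightarrow> t \<in> H"
  shows "odd (card (rcosets H))"
proof -
  note TD = inv_closed_transversalD[OF T]
  have Tc: "T \<subseteq> carrier G"
    using TD(1) rcosets_part_G[OF H] by simp
  have "H \<in> rcosets H"
    using rcosetsI[OF subgroup.subset[OF H] one_closed] coset_mult_one[OF subgroup.subset[OF H]] by simp
  then obtain t0 where t0: "t0 \<in> T" "t0 \<in> H" and t0_unique: "\<And>t. t \<in> T \<Longrightarrow> t \<in> H \<Longrightarrow> t = t0"
    using TD(3) by blast
  have "{t \<in> T. inv t = t} = {t0}"
  proof (intro equalityI subsetI)
    fix t assume "t \<in> {t \<in> T. inv t = t}"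
    then have "t \<in> T" "t \<otimes> t = \<one>"
      using Tc r_inv[of t] by auto
    then show "t \<in> {t0}"
      using involutions Tc t0_unique by blast
  next
    fix t assume "t \<in> {t0}"
    moreover have "inv t0 = t0"
      using t0_unique TD(2)[OF t0(1)] subgroup.m_inv_closed[OF H t0(2)] by blast
    ultimately show "t \<in> {t \<in> T. inv t = t}"
      using t0 by simp
  qed
  moreover have "even (card T) \<longleftrightarrow> even (card {t \<in> T. inv t = t})"
    using Tc TD(2) fin by (intro even_card_iff_even_card_fixpoints) (auto intro: finite_subset)
  ultimately show ?thesis
    using card_inv_closed_transversal[OF H T] by simp
qed

end

section \<open>The groups \<open>SL\<^sub>2(q)\<close>\<close>

lemma SL2_mult_simp [simp]:
  "SL2_mult (a, b, c, d) (e, f, g, h) = (a*e + b*g, a*f + b*h, c*e + d*g, c*f + d*h)"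
  by (simp add: SL2_mult_def)

lemma SL2_carrier [simp]: "(a, b, c, d) \<in> carrier SL2 \<longleftrightarrow> a * d - b * c = 1"
  by (simp add: SL2_def)

lemma SL2_mult [simp]: "x \<otimes>\<^bsub>SL2\<^esub> y = SL2_mult x y"
  by (simp add: SL2_def)

lemma SL2_one [simp]: "\<one>\<^bsub>SL2\<^esub> = (1, 0, 0, 1)"
  by (simp add: SL2_def)

lemma SL2_group: "group (SL2 :: ('a::field \<times> 'a \<times> 'a \<times> 'a) monoid)"
proof (rule groupI)
  fix x y :: "'a \<times> 'a \<times> 'a \<times> 'a"
  assume "x \<in> carrier SL2" "y \<in> carrier SL2"
  moreover obtain a b c d e f g h where "x = (a, b, c, d)" "y = (e, f, g, h)"
    by (cases x, cases y)
  moreover have "(a*e + b*g) * (c*f + d*h) - (a*f + b*h) * (c*e + d*g) = (a*d - b*c) * (e*h - f*g)"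
    by (simp add: algebra_simps)
  ultimately show "x \<otimes>\<^bsub>SL2\<^esub> y \<in> carrier SL2"
    by simp
next
  fix x y z :: "'a \<times> 'a \<times> 'a \<times> 'a"
  show "x \<otimes>\<^bsub>SL2\<^esub> y \<otimes>\<^bsub>SL2\<^esub> z = x \<otimes>\<^bsub>SL2\<^esub> (y \<otimes>\<^bsub>SL2\<^esub> z)"
    by (cases x, cases y, cases z) (simp add: algebra_simps)
next
  fix x :: "'a \<times> 'a \<times> 'a \<times> 'a"
  assume "x \<in> carrier SL2"
  moreover obtain a b c d where "x = (a, b, c, d)"
    by (cases x)
  ultimately show "\<exists>y\<in>carrier SL2. y \<otimes>\<^bsub>SL2\<^esub> x = \<one>\<^bsub>SL2\<^esub>"
    by (intro bexI[of _ "(d, -b, -c, a)"]) (auto simp: algebra_simps)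
qed auto

lemma char_two_neg:
  assumes "2 = (0::'a::ring_1)"
  shows "- x = (x::'a)"
proof -
  have "x + x = 2 * x"
    by (simp add: mult_2)
  then show ?thesis
    using assms by (simp add: add.inverse_unique)
qed

lemma even_card_iff_char_two: "even (card (UNIV :: 'a::{field,finite} set)) \<longleftrightarrow> 2 = (0::'a)"
proof
  assume even: "even (card (UNIV :: 'a set))"
  show "2 = (0::'a)"
  proof (rule ccontr)
    assume "2 \<noteq> (0::'a)"
    then have "- x = x \<longleftrightarrow> x = 0" for x :: 'a
      by (auto simp: neg_eq_iff_add_eq_0 mult_2[symmetric])
    then have "{x \<in> UNIV. - x = x} = {0::'a}"
      by blast
    moreover have "even (card (UNIV :: 'a set)) \<longleftrightarrow> even (card {x \<in> UNIV. - x = (x::'a)})"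
      by (rule even_card_iff_even_card_fixpoints) auto
    ultimately show False
      using even by simp
  qed
next
  assume char: "2 = (0::'a)"
  have "even (card (UNIV :: 'a set)) \<longleftrightarrow> even (card {x \<in> UNIV. x + 1 = (x::'a)})"
    using char by (intro even_card_iff_even_card_fixpoints) (auto simp: add.assoc)
  then show "even (card (UNIV :: 'a set))"
    by simp
qed

lemma SL2_square_char_not_two:
  fixes t :: "'a::field \<times> 'a \<times> 'a \<times> 'a"
  assumes char: "2 \<noteq> (0::'a)" and t: "t \<in> carrier SL2" "t \<otimes>\<^bsub>SL2\<^esub> t = \<one>\<^bsub>SL2\<^esub>"
  shows "t = (1, 0, 0, 1) \<or> t = (-1, 0, 0, -1)"
proof -
  obtain a b c d where abcd: "t = (a, b, c, d)"
    by (cases t)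
  then have det: "a * d - b * c = 1" and sq: "a * a + b * c = 1" "b * (a + d) = 0" "c * (a + d) = 0"
    using t by (auto simp: algebra_simps)
  have "a + d \<noteq> 0"
  proof
    assume "a + d = 0"
    then have "d = - a"
      by (simp add: eq_neg_iff_add_eq_0 add.commute)
    then have "a * d - b * c = - (a * a + b * c)"
      by simp
    then have "1 = - (1::'a)"
      using det sq(1) by simp
    then have "2 = (0::'a)"
      by (simp add: eq_neg_iff_add_eq_0)
    with char show False ..
  qed
  then have bc: "b = 0" "c = 0"
    using sq(2,3) by simp_all
  then have "a * d = 1" "a * a = 1"
    using det sq(1) by simp_all
  then have "d = a"
    using inverse_unique by metis
  moreover have "a = 1 \<or> a = -1"
  proof -
    have "(a - 1) * (a + 1) = 0"
      using \<open>a * a = 1\<close> by (simp add: algebra_simps)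
    then show ?thesis
      by (auto simp: eq_neg_iff_add_eq_0)
  qed
  ultimately show ?thesis
    using abcd bc by auto
qed

lemma SL2_square_eq_one_iff_char_two:
  fixes a b c d :: "'a::field"
  assumes char: "2 = (0::'a)" and det: "a * d - b * c = 1"
  shows "(a, b, c, d) \<otimes>\<^bsub>SL2\<^esub> (a, b, c, d) = \<one>\<^bsub>SL2\<^esub> \<longleftrightarrow> a + d = 0"
proof -
  have square: "(a, b, c, d) \<otimes>\<^bsub>SL2\<^esub> (a, b, c, d) = (a*a + b*c, b * (a + d), c * (a + d), d*d + b*c)"
    by (simp add: algebra_simps)
  show ?thesis
  proof
    assume "(a, b, c, d) \<otimes>\<^bsub>SL2\<^esub> (a, b, c, d) = \<one>\<^bsub>SL2\<^esub>"
    then have sq: "a*a + b*c = 1" "d*d + b*c = 1" "b * (a + d) = 0" "c * (a + d) = 0"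
      using square by simp_all
    show "a + d = 0"
    proof (rule ccontr)
      assume "a + d \<noteq> 0"
      then have "b = 0" "c = 0"
        using sq(3,4) by simp_all
      then have "a * d = 1" "a * a = 1"
        using det sq(1) by simp_all
      then have "d = a"
        using inverse_unique by metis
      then have "a + d = 2 * a"
        by (simp add: algebra_simps)
      with char \<open>a + d \<noteq> 0\<close> show False
        by simp
    qed
  next
    assume "a + d = 0"
    then have "d = - a"
      by (simp add: eq_neg_iff_add_eq_0 add.commute)
    then have "d = a"
      using char_two_neg[OF char, of a] by simp
    have "a * d - b * c = a * a + - (b * c)"
      using \<open>d = a\<close> by simp
    also have "\<dots> = a * a + b * c"
      using char_two_neg[OF char, of "b * c"] by simp
    finally have "a * a + b * c = 1"
      using det by metis
    moreover have "d * d + b * c = 1"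
      using calculation \<open>d = a\<close> by simp
    ultimately show "(a, b, c, d) \<otimes>\<^bsub>SL2\<^esub> (a, b, c, d) = \<one>\<^bsub>SL2\<^esub>"
      using square \<open>a + d = 0\<close> by simp
  qed
qed

lemma SL2_fourth_root_char_two:
  fixes u :: "'a::field \<times> 'a \<times> 'a \<times> 'a"
  assumes char: "2 = (0::'a)" and u: "u \<in> carrier SL2"
    and fourth: "(u \<otimes>\<^bsub>SL2\<^esub> u) \<otimes>\<^bsub>SL2\<^esub> (u \<otimes>\<^bsub>SL2\<^esub> u) = \<one>\<^bsub>SL2\<^esub>"
  shows "u \<otimes>\<^bsub>SL2\<^esub> u = \<one>\<^bsub>SL2\<^esub>"
proof -
  interpret group "SL2 :: ('a \<times> 'a \<times> 'a \<times> 'a) monoid"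
    by (rule SL2_group)
  obtain a b c d where abcd: "u = (a, b, c, d)"
    by (cases u)
  have det: "a * d - b * c = 1"
    using u abcd by simp
  define A B C D where "A = a*a + b*c" and "B = a*b + b*d" and "C = c*a + d*c" and "D = c*b + d*d"
  have ABCD: "u \<otimes>\<^bsub>SL2\<^esub> u = (A, B, C, D)"
    unfolding A_def B_def C_def D_def abcd by simp
  then have "A * D - B * C = 1"
    using m_closed[OF u u] by simp
  then have "A + D = 0"
    using SL2_square_eq_one_iff_char_two[OF char] fourth ABCD by simp
  moreover have "A + D = (a + d) * (a + d)"
  proof -
    have "A + D = (a + d) * (a + d) - 2 * (a * d - b * c)"
      unfolding A_def D_def by (simp add: algebra_simps)
    then show ?thesis
      using char by simp
  qed
  ultimately have "a + d = 0"
    by simp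
  then show ?thesis
    using SL2_square_eq_one_iff_char_two[OF char det] abcd by simp
qed

lemma SL2_subgroup_perfect_code_char_two:
  fixes H :: "('a::{field,finite} \<times> 'a \<times> 'a \<times> 'a) set"
  assumes char: "2 = (0::'a)" and H: "subgroup H SL2"
  shows "subgroup_perfect_code SL2 H"
proof -
  interpret group "SL2 :: ('a \<times> 'a \<times> 'a \<times> 'a) monoid"
    by (rule SL2_group)
  have fin: "finite (carrier (SL2 :: ('a \<times> 'a \<times> 'a \<times> 'a) monoid))"
    by simp
  obtain m :: nat where "odd m" "\<forall>g\<in>carrier (SL2 :: ('a \<times> 'a \<times> 'a \<times> 'a) monoid).
      (g \<otimes>\<^bsub>SL2\<^esub> g) [^]\<^bsub>SL2\<^esub> m = \<one>\<^bsub>SL2\<^esub>"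
    using odd_power_of_squares_eq_one[OF fin SL2_fourth_root_char_two[OF char]] by blast
  then show ?thesis
    using subgroup_perfect_code_if_odd_power_of_squares[OF H fin] by simp
qed

lemma SL2_involutions_in_subgroup:
  fixes H :: "('a::{field,finite} \<times> 'a \<times> 'a \<times> 'a) set"
  assumes char: "2 \<noteq> (0::'a)" and H: "subgroup H SL2" and even: "even (card H)"
    and t: "t \<in> carrier SL2" "t \<otimes>\<^bsub>SL2\<^esub> t = \<one>\<^bsub>SL2\<^esub>"
  shows "t \<in> H"
proof -
  interpret group "SL2 :: ('a \<times> 'a \<times> 'a \<times> 'a) monoid"
    by (rule SL2_group)
  have "finite (carrier (SL2 :: ('a \<times> 'a \<times> 'a \<times> 'a) monoid))"
    by simp
  then obtain h where h: "h \<in> H" "h \<noteq> \<one>\<^bsub>SL2\<^esub>" "h \<otimes>\<^bsub>SL2\<^esub> h = \<one>\<^bsub>SL2\<^esub>"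
    using subgroup_involution_if_even_card[OF H _ even] by blast
  then have "h = (-1, 0, 0, -1)"
    using SL2_square_char_not_two[OF char subgroup.mem_carrier[OF H h(1)]] by simp
  then show ?thesis
    using SL2_square_char_not_two[OF char t] h(1) subgroup.one_closed[OF H] by auto
qed

lemma SL2_subgroup_perfect_code_iff_char_not_two:
  fixes H :: "('a::{field,finite} \<times> 'a \<times> 'a \<times> 'a) set"
  assumes char: "2 \<noteq> (0::'a)" and H: "subgroup H SL2"
  shows "subgroup_perfect_code SL2 H \<longleftrightarrow> odd (card H) \<or> odd (card (rcosets\<^bsub>SL2\<^esub> H))"
proof -
  interpret group "SL2 :: ('a \<times> 'a \<times> 'a \<times> 'a) monoid"
    by (rule SL2_group)
  have fin: "finite (carrier (SL2 :: ('a \<times> 'a \<times> 'a \<times> 'a) monoid))"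
    by simp
  show ?thesis
  proof
    assume "subgroup_perfect_code SL2 H"
    then obtain T where T: "inv_closed_transversal SL2 (rcosets\<^bsub>SL2\<^esub> H) T"
      using subgroup_perfect_code_iff_inv_closed_transversal[OF H] by blast
    show "odd (card H) \<or> odd (card (rcosets\<^bsub>SL2\<^esub> H))"
    proof (cases "even (card H)")
      case True
      then show ?thesis
        using odd_index_if_involutions_in_subgroup[OF H fin T] SL2_involutions_in_subgroup[OF char H]
        by blast
    qed simp
  qed (use subgroup_perfect_code_if_odd_order[OF H fin] subgroup_perfect_code_if_odd_index[OF H fin] in blast)
qed

theorem lemma4p6:
  fixes G :: "('a::{field,finite} \<times> 'a \<times> 'a \<times> 'a) monoid"
  assumes "G = SL2"
  shows "(even (card (UNIV :: 'a set)) \<longrightarrow> (\<forall>H. subgroup H G \<longrightarrow> subgroup_perfect_code G H)) \<and>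
         (odd (card (UNIV :: 'a set)) \<longrightarrow> (\<forall>H. subgroup H G \<longrightarrow>
             (subgroup_perfect_code G H \<longleftrightarrow>
                two_part (card H) = 1 \<or> two_part (card H) = two_part (card (carrier G)))))"
proof -
  interpret group G
    using SL2_group assms by simp
  have fin: "finite (carrier G)"
    by simp
  show ?thesis
  proof (intro conjI impI allI)
    fix H assume "even (card (UNIV :: 'a set))" "subgroup H G"
    then show "subgroup_perfect_code G H"
      using SL2_subgroup_perfect_code_char_two even_card_iff_char_two assms by blast
  next
    fix H assume "odd (card (UNIV :: 'a set))" and H: "subgroup H G"
    then have "subgroup_perfect_code G H \<longleftrightarrow> odd (card H) \<or> odd (card (rcosets\<^bsub>G\<^esub> H))"
      using SL2_subgroup_perfect_code_iff_char_not_two even_card_iff_char_two assms by blast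
    then show "subgroup_perfect_code G H \<longleftrightarrow>
        two_part (card H) = 1 \<or> two_part (card H) = two_part (card (carrier G))"
      using two_part_card_subgroup[OF H fin] by (simp add: order_def)
  qed
qed

end
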